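(* Let $n\ge4$ and for $1\le p\le n$ let $J_p$ be the set of regular elements of $\mathcal{ORCT}_n$ whose image has exactly $p$ elements. Then for all $1\le p\le n-2$, $\langle J_p\rangle\subseteq\langle J_{p+1}\rangle$, where $\langle A\rangle$ denotes the subsemigroup of $\mathcal{T}_n$ generated by $A$.
   Context: $\mathcal{T}_n$ is the full transformation semigroup on $[n]=\{1,\dots,n\}$ under composition. $\alpha$ is a contraction if $|x\alpha-y\alpha|\le|x-y|$ for all $x,y$; order-preserving if $x\le y\Rightarrow x\alpha\le y\alpha$; order-reversing if $x\le y\Rightarrow x\alpha\ge y\alpha$. $\mathcal{ORCT}_n$ is the semigroup of contractions that are order-preserving or order-reversing; $\alpha\in\mathcal{ORCT}_n$ is regular if $\alpha\beta\alpha=\alpha$ for some $\beta\in\mathcal{ORCT}_n$. *)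

theory Defs
  imports Main
begin

text \<open>Full transformation semigroup T_n: maps of {1..n} into itself, represented as
  functions nat => nat that are the identity outside {1..n} (so that equality of
  transformations is equality of functions). Maps are written on the right, so the
  product alpha beta (first alpha, then beta) is the function composition beta o alpha.\<close>

definition Tn :: "nat \<Rightarrow> (nat \<Rightarrow> nat) set" where
  "Tn n = {f. (\<forall>x\<in>{1..n}. f x \<in> {1..n}) \<and> (\<forall>x. x \<notin> {1..n} \<longrightarrow> f x = x)}"

definition tmult :: "(nat \<Rightarrow> nat) \<Rightarrow> (nat \<Rightarrow> nat) \<Rightarrow> (nat \<Rightarrow> nat)" where
  "tmult a b = b \<circ> a"

definition contraction :: "nat \<Rightarrow> (nat \<Rightarrow> nat) \<Rightarrow> bool" where
  "contraction n f \<longleftrightarrow> (\<forall>x\<in>{1..n}. \<forall>y\<in>{1..n}.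
      \<bar>int (f x) - int (f y)\<bar> \<le> \<bar>int x - int y\<bar>)"

definition order_preserving :: "nat \<Rightarrow> (nat \<Rightarrow> nat) \<Rightarrow> bool" where
  "order_preserving n f \<longleftrightarrow> (\<forall>x\<in>{1..n}. \<forall>y\<in>{1..n}. x \<le> y \<longrightarrow> f x \<le> f y)"

definition order_reversing :: "nat \<Rightarrow> (nat \<Rightarrow> nat) \<Rightarrow> bool" where
  "order_reversing n f \<longleftrightarrow> (\<forall>x\<in>{1..n}. \<forall>y\<in>{1..n}. x \<le> y \<longrightarrow> f x \<ge> f y)"

definition ORCT :: "nat \<Rightarrow> (nat \<Rightarrow> nat) set" where
  "ORCT n = {f \<in> Tn n. contraction n f \<and> (order_preserving n f \<or> order_reversing n f)}"

definition regular_ORCT :: "nat \<Rightarrow> (nat \<Rightarrow> nat) \<Rightarrow> bool" where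
  "regular_ORCT n a \<longleftrightarrow> a \<in> ORCT n \<and> (\<exists>b\<in>ORCT n. tmult (tmult a b) a = a)"

definition J :: "nat \<Rightarrow> nat \<Rightarrow> (nat \<Rightarrow> nat) set" where
  "J n p = {a. regular_ORCT n a \<and> card (a ` {1..n}) = p}"

inductive_set gen_semigroup :: "(nat \<Rightarrow> nat) set \<Rightarrow> (nat \<Rightarrow> nat) set" for A where
  base: "a \<in> A \<Longrightarrow> a \<in> gen_semigroup A"
| mult: "a \<in> gen_semigroup A \<Longrightarrow> b \<in> gen_semigroup A \<Longrightarrow> tmult a b \<in> gen_semigroup A"

end

theory Submission
  imports Defs
begin

text \<open>If a b a = a with a, b in ORCT_n, then a is a monotone contraction, so its image is an
  interval of p consecutive points. Consecutive image points have distinct preimages under b at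
  distance at most 1, so b maps the image onto p consecutive points, on which a is a translation or
  a reflection, and by monotonicity a is constant on either side of them. Hence every element of
  J_p clamps the chain into a window of length p and then moves the window rigidly onto its image;
  conversely, every such map lies in J_p. When p + 2 <= n, such a map is the product of two such
  maps with windows of length p + 1 that overlap in the original window; if the window touches an
  end of the chain, it is first translated inwards by a third one.\<close>

section \<open>Collapses\<close>

definition clamp :: "int \<Rightarrow> int \<Rightarrow> int \<Rightarrow> int" where
  "clamp lo hi x = max lo (min x hi)"

definition transf :: "nat \<Rightarrow> (int \<Rightarrow> int) \<Rightarrow> nat \<Rightarrow> nat" where
  "transf n g x = (if x \<in> {1..n} then nat (g (int x)) else x)"

text \<open>The induced maps of the chain are
  exactly the regular elements of ORCT_n.\<close>

definition collapse_fun :: "int \<Rightarrow> bool \<Rightarrow> int \<Rightarrow> nat \<Rightarrow> int \<Rightarrow> int" where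
  "collapse_fun s e k q x =
     (if e then s + (clamp k (k + int q - 1) x - k) else s - (clamp k (k + int q - 1) x - k))"

definition collapse :: "nat \<Rightarrow> int \<Rightarrow> bool \<Rightarrow> int \<Rightarrow> nat \<Rightarrow> nat \<Rightarrow> nat" where
  "collapse n s e k q = transf n (collapse_fun s e k q)"

definition valid_collapse :: "nat \<Rightarrow> int \<Rightarrow> bool \<Rightarrow> int \<Rightarrow> nat \<Rightarrow> bool" where
  "valid_collapse n s e k q \<longleftrightarrow> 1 \<le> q \<and> 1 \<le> k \<and> k + int q - 1 \<le> int n \<and>
     (if e then 1 \<le> s \<and> s + int q - 1 \<le> int n else 1 \<le> s - int q + 1 \<and> s \<le> int n)"

lemmas collapse_defs = collapse_fun_def clamp_def valid_collapse_def

lemma Tn_mapsto: "f \<in> Tn n \<Longrightarrow> x \<in> {1..n} \<Longrightarrow> f x \<in> {1..n}"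
  unfolding Tn_def by blast

lemma Tn_fixes: "f \<in> Tn n \<Longrightarrow> x \<notin> {1..n} \<Longrightarrow> f x = x"
  unfolding Tn_def by blast

lemma Tn_comp: "f \<in> Tn n \<Longrightarrow> g \<in> Tn n \<Longrightarrow> g \<circ> f \<in> Tn n"
  unfolding Tn_def by auto

lemma contraction_comp:
  assumes "f \<in> Tn n" "contraction n f" "contraction n g"
  shows "contraction n (g \<circ> f)"
  unfolding contraction_def
proof (intro ballI)
  fix x y assume "x \<in> {1..n}" "y \<in> {1..n}"
  moreover have "f x \<in> {1..n}" "f y \<in> {1..n}"
    using Tn_mapsto[OF assms(1)] \<open>x \<in> {1..n}\<close> \<open>y \<in> {1..n}\<close> by blast+
  ultimately have "\<bar>int (g (f x)) - int (g (f y))\<bar> \<le> \<bar>int (f x) - int (f y)\<bar>"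
    "\<bar>int (f x) - int (f y)\<bar> \<le> \<bar>int x - int y\<bar>"
    using assms(2,3) unfolding contraction_def by blast+
  then show "\<bar>int ((g \<circ> f) x) - int ((g \<circ> f) y)\<bar> \<le> \<bar>int x - int y\<bar>" by simp
qed

lemma order_preserving_comp_reversing:
  assumes "f \<in> Tn n" "order_reversing n f" "order_reversing n g"
  shows "order_preserving n (g \<circ> f)"
  unfolding order_preserving_def
proof (intro ballI impI)
  fix x y assume "x \<in> {1..n}" "y \<in> {1..n}" "x \<le> y"
  moreover from this have "f x \<in> {1..n}" "f y \<in> {1..n}" "f y \<le> f x"
    using assms(1,2) Tn_mapsto unfolding order_reversing_def by blast+
  ultimately show "(g \<circ> f) x \<le> (g \<circ> f) y"
    using assms(3) unfolding order_reversing_def by simp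
qed

lemma transf_apply: "x \<in> {1..n} \<Longrightarrow> transf n g x = nat (g (int x))"
  by (simp add: transf_def)

lemma transf_outside: "x \<notin> {1..n} \<Longrightarrow> transf n g x = x"
  unfolding transf_def by (rule if_not_P)

lemma transf_in_Tn:
  assumes "\<And>x. x \<in> {1..n} \<Longrightarrow> g (int x) \<in> {1..int n}"
  shows "transf n g \<in> Tn n"
  unfolding Tn_def
proof (intro CollectI conjI ballI allI impI)
  fix x assume "x \<in> {1..n}"
  with assms[OF this] show "transf n g x \<in> {1..n}" by (auto simp: transf_apply)
qed (rule transf_outside)

lemma transf_comp:
  assumes "\<And>x. x \<in> {1..n} \<Longrightarrow> g1 (int x) \<in> {1..int n} \<and> g2 (g1 (int x)) = g (int x)"
  shows "transf n g2 \<circ> transf n g1 = transf n g"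
proof
  fix x
  show "(transf n g2 \<circ> transf n g1) x = transf n g x"
  proof (cases "x \<in> {1..n}")
    case True
    with assms[OF True] have "nat (g1 (int x)) \<in> {1..n}" by auto
    with assms[OF True] True show ?thesis by (simp add: transf_apply)
  next
    case False
    then show ?thesis by (simp only: comp_apply transf_outside[OF False])
  qed
qed

lemma contraction_transf:
  assumes "\<And>x. x \<in> {1..n} \<Longrightarrow> g (int x) \<in> {1..int n}"
    and "\<And>x y. \<bar>g x - g y\<bar> \<le> \<bar>x - y\<bar>"
  shows "contraction n (transf n g)"
  unfolding contraction_def
proof (intro ballI)
  fix x y assume "x \<in> {1..n}" "y \<in> {1..n}"
  with assms(1)[of x] assms(1)[of y] assms(2)[of "int x" "int y"]
  show "\<bar>int (transf n g x) - int (transf n g y)\<bar> \<le> \<bar>int x - int y\<bar>"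
    by (simp add: transf_apply)
qed

lemma order_preserving_transf:
  assumes "mono g"
  shows "order_preserving n (transf n g)"
  unfolding order_preserving_def
proof (intro ballI impI)
  fix x y assume "x \<in> {1..n}" "y \<in> {1..n}" "x \<le> y"
  moreover have "g (int x) \<le> g (int y)"
    using \<open>mono g\<close> \<open>x \<le> y\<close> by (simp add: monoD)
  ultimately show "transf n g x \<le> transf n g y"
    by (simp add: transf_apply nat_mono)
qed

lemma order_reversing_transf:
  assumes "antimono g"
  shows "order_reversing n (transf n g)"
  unfolding order_reversing_def
proof (intro ballI impI)
  fix x y assume "x \<in> {1..n}" "y \<in> {1..n}" "x \<le> y"
  moreover have "g (int y) \<le> g (int x)"
    using \<open>antimono g\<close> \<open>x \<le> y\<close> by (simp add: antimonoD)
  ultimately show "transf n g y \<le> transf n g x"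
    by (simp add: transf_apply nat_mono)
qed

lemma collapse_fun_range:
  "valid_collapse n s e k q \<Longrightarrow> x \<in> {1..int n} \<Longrightarrow> collapse_fun s e k q x \<in> {1..int n}"
  by (auto simp: collapse_defs)

lemma collapse_fun_contraction:
  "\<bar>collapse_fun s e k q x - collapse_fun s e k q y\<bar> \<le> \<bar>x - y\<bar>"
  by (auto simp: collapse_defs)

lemma mono_collapse_fun: "mono (collapse_fun s True k q)"
  by (auto simp: collapse_defs intro: monoI)

lemma antimono_collapse_fun: "antimono (collapse_fun s False k q)"
  by (auto simp: collapse_defs intro: antimonoI)

lemma collapse_in_Tn:
  assumes "valid_collapse n s e k q"
  shows "collapse n s e k q \<in> Tn n"
  unfolding collapse_def by (rule transf_in_Tn, rule collapse_fun_range[OF assms]) auto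

lemma contraction_collapse:
  assumes "valid_collapse n s e k q"
  shows "contraction n (collapse n s e k q)"
  unfolding collapse_def
  by (rule contraction_transf, rule collapse_fun_range[OF assms])
    (auto intro: collapse_fun_contraction)

lemma order_preserving_collapse: "order_preserving n (collapse n s True k q)"
  unfolding collapse_def by (rule order_preserving_transf) (rule mono_collapse_fun)

lemma order_reversing_collapse: "order_reversing n (collapse n s False k q)"
  unfolding collapse_def by (rule order_reversing_transf) (rule antimono_collapse_fun)

lemma collapse_in_ORCT: "valid_collapse n s e k q \<Longrightarrow> collapse n s e k q \<in> ORCT n"
  unfolding ORCT_def
  using collapse_in_Tn contraction_collapse order_preserving_collapse order_reversing_collapse
  by (cases e) auto

lemma collapse_comp:
  assumes "valid_collapse n s1 e1 k1 q1"
    and "\<And>x. x \<in> {1..int n} \<Longrightarrow>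
      collapse_fun s2 e2 k2 q2 (collapse_fun s1 e1 k1 q1 x) = collapse_fun s e k q x"
  shows "collapse n s2 e2 k2 q2 \<circ> collapse n s1 e1 k1 q1 = collapse n s e k q"
  unfolding collapse_def by (rule transf_comp) (use assms collapse_fun_range in auto)

lemma regular_collapse:
  assumes v: "valid_collapse n s e k q"
  shows "regular_ORCT n (collapse n s e k q)"
proof -
  let ?a = "collapse n s e k q"
  let ?clamp = "collapse n k True k q"
  define b where "b = (if e then collapse n k True s q
                       else collapse n (k + int q - 1) False (s - int q + 1) q)"
  have b: "b \<in> ORCT n"
    unfolding b_def using v by (auto intro!: collapse_in_ORCT simp: valid_collapse_def)
  have "b \<circ> ?a = ?clamp"
    unfolding b_def using v by (cases e) (auto intro!: collapse_comp simp: collapse_defs)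
  moreover have "?a \<circ> ?clamp = ?a"
    using v by (intro collapse_comp) (auto simp: collapse_defs)
  ultimately have "tmult (tmult ?a b) ?a = ?a"
    by (simp add: tmult_def comp_assoc)
  then show ?thesis
    unfolding regular_ORCT_def using collapse_in_ORCT[OF v] b by blast
qed

lemma card_collapse_image:
  assumes v: "valid_collapse n s e k q"
  shows "card (collapse n s e k q ` {1..n}) = q"
proof -
  define lo where "lo = (if e then s else s - int q + 1)"
  have "collapse n s e k q ` {1..n} = {nat lo .. nat (lo + int q - 1)}"
  proof
    show "collapse n s e k q ` {1..n} \<subseteq> {nat lo .. nat (lo + int q - 1)}"
      using v by (auto simp: collapse_def transf_apply collapse_defs lo_def intro!: nat_mono)
  next
    show "{nat lo .. nat (lo + int q - 1)} \<subseteq> collapse n s e k q ` {1..n}"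
    proof
      fix y assume y: "y \<in> {nat lo .. nat (lo + int q - 1)}"
      define x where "x = (if e then k + (int y - s) else k + (s - int y))"
      have x: "nat x \<in> {1..n}" "1 \<le> x"
        using v y by (auto simp: x_def lo_def valid_collapse_def)
      have "collapse_fun s e k q x = int y"
        using v y by (auto simp: x_def lo_def collapse_defs)
      then have "collapse n s e k q (nat x) = y"
        using x by (simp add: collapse_def transf_apply)
      with x show "y \<in> collapse n s e k q ` {1..n}" by force
    qed
  qed
  then show ?thesis
    using v by (auto simp: valid_collapse_def lo_def)
qed

lemma collapse_in_J: "valid_collapse n s e k q \<Longrightarrow> collapse n s e k q \<in> J n q"
  unfolding J_def using regular_collapse card_collapse_image by blast

section \<open>Collapses of rank p as products of collapses of rank p + 1\<close>

lemma comp_in_gen_semigroup: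
  "f \<in> gen_semigroup A \<Longrightarrow> g \<in> gen_semigroup A \<Longrightarrow> g \<circ> f \<in> gen_semigroup A"
  using gen_semigroup.mult[of f A g] by (simp add: tmult_def)

lemma gen_semigroup_minimal:
  assumes "A \<subseteq> gen_semigroup B"
  shows "gen_semigroup A \<subseteq> gen_semigroup B"
proof
  fix x assume "x \<in> gen_semigroup A"
  then show "x \<in> gen_semigroup B"
    by induction (use assms gen_semigroup.mult in blast)+
qed

lemma collapse_in_gen_semigroup:
  "valid_collapse n s e k q \<Longrightarrow> collapse n s e k q \<in> gen_semigroup (J n q)"
  by (rule gen_semigroup.base) (rule collapse_in_J)

lemma collapse_comp_in_gen_semigroup:
  assumes "valid_collapse n s1 e1 k1 q" "valid_collapse n s2 e2 k2 q"
    and "collapse n s2 e2 k2 q \<circ> collapse n s1 e1 k1 q = f"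
  shows "f \<in> gen_semigroup (J n q)"
  using assms collapse_in_gen_semigroup comp_in_gen_semigroup by metis

text \<open>The window {k..k+p-1} is the overlap of two windows of length p + 1; the second factor
  maps its window onto the image extended by one point on a side where there is room.\<close>

lemma interior_collapse_in_gen_semigroup:
  assumes v: "valid_collapse n s e k p" and k: "2 \<le> k" "k + int p \<le> int n" and p: "p + 2 \<le> n"
  shows "collapse n s e k p \<in> gen_semigroup (J n (p + 1))"
proof (cases "if e then 2 \<le> s else s + 1 \<le> int n")
  case True
  show ?thesis
  proof (rule collapse_comp_in_gen_semigroup)
    show "valid_collapse n k True k (p + 1)"
      using v k by (auto simp: valid_collapse_def)
    show "valid_collapse n (if e then s - 1 else s + 1) e (k - 1) (p + 1)"
      using v k True by (auto simp: valid_collapse_def split: if_splits)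
    show "collapse n (if e then s - 1 else s + 1) e (k - 1) (p + 1) \<circ> collapse n k True k (p + 1)
        = collapse n s e k p"
      using v k by (intro collapse_comp) (auto simp: collapse_defs)
  qed
next
  case False
  show ?thesis
  proof (rule collapse_comp_in_gen_semigroup)
    show "valid_collapse n (k - 1) True (k - 1) (p + 1)"
      using v k by (auto simp: valid_collapse_def)
    show "valid_collapse n s e k (p + 1)"
      using v k False p by (auto simp: valid_collapse_def split: if_splits)
    show "collapse n s e k (p + 1) \<circ> collapse n (k - 1) True (k - 1) (p + 1) = collapse n s e k p"
      using v k by (intro collapse_comp) (auto simp: collapse_defs)
  qed
qed

text \<open>A window touching an end of the chain is first translated one step inwards.\<close>

lemma collapse_in_gen_semigroup_Suc:
  assumes v: "valid_collapse n s e k p" and p: "p + 2 \<le> n"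
  shows "collapse n s e k p \<in> gen_semigroup (J n (p + 1))"
proof -
  consider "k = 1" | "k + int p - 1 = int n" | "2 \<le> k" "k + int p \<le> int n"
    using v by (force simp: valid_collapse_def)
  then show ?thesis
  proof cases
    case 1
    have "collapse n s e 2 p \<circ> collapse n 2 True 1 (p + 1) = collapse n s e k p"
      using v 1 p by (intro collapse_comp) (auto simp: collapse_defs)
    moreover have "collapse n 2 True 1 (p + 1) \<in> gen_semigroup (J n (p + 1))"
      using v p by (intro collapse_in_gen_semigroup) (auto simp: valid_collapse_def)
    moreover have "collapse n s e 2 p \<in> gen_semigroup (J n (p + 1))"
      using v p 1 by (intro interior_collapse_in_gen_semigroup) (auto simp: valid_collapse_def)
    ultimately show ?thesis by (metis comp_in_gen_semigroup)
  next
    case 2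
    let ?t = "collapse n (int n - int p - 1) True (int n - int p) (p + 1)"
    have "collapse n s e (k - 1) p \<circ> ?t = collapse n s e k p"
      using v 2 p by (intro collapse_comp) (auto simp: collapse_defs)
    moreover have "?t \<in> gen_semigroup (J n (p + 1))"
      using v p by (intro collapse_in_gen_semigroup) (auto simp: valid_collapse_def)
    moreover have "collapse n s e (k - 1) p \<in> gen_semigroup (J n (p + 1))"
      using v p 2 by (intro interior_collapse_in_gen_semigroup) (auto simp: valid_collapse_def)
    ultimately show ?thesis by (metis comp_in_gen_semigroup)
  next
    case 3
    then show ?thesis using interior_collapse_in_gen_semigroup[OF v] p by auto
  qed
qed

section \<open>Regular elements are collapses\<close>

lemma contraction_Suc:
  assumes "contraction n a" "i \<in> {1..n}" "Suc i \<in> {1..n}"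
  shows "\<bar>int (a (Suc i)) - int (a i)\<bar> \<le> 1"
proof -
  have "\<bar>int (a (Suc i)) - int (a i)\<bar> \<le> \<bar>int (Suc i) - int i\<bar>"
    using assms unfolding contraction_def by blast
  then show ?thesis by simp
qed

lemma image_order_preserving_contraction:
  assumes "contraction n a" "order_preserving n a" "1 \<le> n"
  shows "a ` {1..n} = {a 1..a n}"
proof
  show "a ` {1..n} \<subseteq> {a 1..a n}"
    using assms(2,3) unfolding order_preserving_def by auto
  show "{a 1..a n} \<subseteq> a ` {1..n}"
  proof
    fix y assume "y \<in> {a 1..a n}"
    then obtain x where "1 \<le> x" "x \<le> n" "int (a x) = int y"
      using nat_intermed_int_val[of 1 n "\<lambda>i. int (a i)" "int y"]
        contraction_Suc[OF assms(1)] assms(3)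
      by auto
    then show "y \<in> a ` {1..n}" by force
  qed
qed

lemma order_preserving_section_is_shift:
  assumes mono: "order_preserving n a" and bc: "contraction n b"
    and sec: "\<And>y. y \<in> {c..d} \<Longrightarrow> a (b y) = y \<and> b y \<in> {1..n}"
    and cd: "{c..d} \<subseteq> {1..n}"
  shows "c + i \<le> d \<Longrightarrow> b (c + i) = b c + i"
proof (induction i)
  case (Suc i)
  let ?y = "c + i"
  have y: "?y \<in> {c..d}" "Suc ?y \<in> {c..d}"
    using Suc.prems by auto
  have "\<bar>int (b (Suc ?y)) - int (b ?y)\<bar> \<le> 1"
    using contraction_Suc[OF bc] y cd by blast
  moreover have "b (Suc ?y) \<noteq> b ?y"
    using sec[OF y(1)] sec[OF y(2)] by (metis n_not_Suc_n)
  moreover have "\<not> b (Suc ?y) < b ?y"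
  proof
    assume "b (Suc ?y) < b ?y"
    moreover have "b (Suc ?y) \<in> {1..n}" "b ?y \<in> {1..n}"
      using sec y by blast+
    ultimately have "a (b (Suc ?y)) \<le> a (b ?y)"
      using mono unfolding order_preserving_def by (meson less_imp_le)
    then show False
      using sec[OF y(1)] sec[OF y(2)] by simp
  qed
  ultimately show ?case
    using Suc by simp
qed simp

lemma order_preserving_eq_collapse:
  assumes aT: "a \<in> Tn n" and ap: "order_preserving n a"
    and window: "t \<in> {1..n}" "t + (q - 1) \<in> {1..n}" and q: "1 \<le> q"
    and shift: "\<And>i. i < q \<Longrightarrow> a (t + i) = a 1 + i"
    and an: "a n = a 1 + (q - 1)"
  shows "a = collapse n (int (a 1)) True (int t) q"
proof
  fix x
  have mono: "a y \<le> a z" if "y \<in> {1..n}" "z \<in> {1..n}" "y \<le> z" for y z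
    using ap that unfolding order_preserving_def by blast
  show "a x = collapse n (int (a 1)) True (int t) q x"
  proof (cases "x \<in> {1..n}")
    case False
    then show ?thesis
      using Tn_fixes[OF aT] by (simp add: collapse_def transf_outside)
  next
    case True
    then have collapse_x: "collapse n (int (a 1)) True (int t) q x
        = nat (int (a 1) + (clamp (int t) (int t + int q - 1) (int x) - int t))"
      by (simp add: collapse_def transf_apply collapse_fun_def)
    consider "x < t" | "t \<le> x" "x \<le> t + (q - 1)" | "t + (q - 1) < x"
      by linarith
    then show ?thesis
    proof cases
      case 1
      then have "a x = a 1"
        using mono[of 1 x] mono[of x t] shift[of 0] True window q by auto
      then show ?thesis
        using collapse_x 1 by (simp add: clamp_def)
    next
      case 2
      then have "a x = a 1 + (x - t)"
        using shift[of "x - t"] window q by auto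
      then show ?thesis
        using collapse_x 2 window q by (simp add: clamp_def)
    next
      case 3
      then have "a x = a n"
        using mono[of "t + (q - 1)" x] mono[of x n] shift[of "q - 1"] an True window q by auto
      then show ?thesis
        using collapse_x 3 window an q by (simp add: clamp_def)
    qed
  qed
qed

lemma regular_order_preserving_is_collapse:
  assumes aT: "a \<in> Tn n" and ac: "contraction n a" and ap: "order_preserving n a"
    and bT: "b \<in> Tn n" and bc: "contraction n b"
    and reg: "\<And>x. x \<in> {1..n} \<Longrightarrow> a (b (a x)) = a x" and n: "1 \<le> n"
  shows "\<exists>s k q. valid_collapse n s True k q \<and> a = collapse n s True k q"
proof -
  define t where "t = b (a 1)"
  define q where "q = a n - a 1 + 1"
  have img: "a ` {1..n} = {a 1..a n}"
    by (rule image_order_preserving_contraction[OF ac ap n])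
  have img_sub: "{a 1..a n} \<subseteq> {1..n}"
    unfolding img[symmetric] using Tn_mapsto[OF aT] by blast
  have a1_an: "a 1 \<le> a n"
    using ap n unfolding order_preserving_def by simp
  have sec: "a (b y) = y \<and> b y \<in> {1..n}" if "y \<in> {a 1..a n}" for y
  proof -
    have "y \<in> a ` {1..n}"
      using that img by simp
    then obtain x where "x \<in> {1..n}" "y = a x"
      by blast
    then have "a (b y) = y"
      using reg by simp
    moreover have "b y \<in> {1..n}"
      using Tn_mapsto[OF bT] img_sub that by (meson subsetD)
    ultimately show ?thesis ..
  qed
  have shift: "b (a 1 + i) = t + i" if "i < q" for i
    using order_preserving_section_is_shift[OF ap bc sec img_sub, of i] that a1_an
    unfolding t_def q_def by simp
  have window: "t \<in> {1..n}" "t + (q - 1) \<in> {1..n}"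
  proof -
    show "t \<in> {1..n}"
      using sec[of "a 1"] a1_an unfolding t_def by simp
    have "t + (q - 1) = b (a n)"
      using shift[of "q - 1"] a1_an unfolding q_def by simp
    then show "t + (q - 1) \<in> {1..n}"
      using sec[of "a n"] a1_an by simp
  qed
  have "a = collapse n (int (a 1)) True (int t) q"
  proof (rule order_preserving_eq_collapse[OF aT ap window])
    show "a (t + i) = a 1 + i" if "i < q" for i
      using sec[of "a 1 + i"] shift[OF that] that a1_an unfolding q_def by simp
  qed (use a1_an in \<open>simp_all add: q_def\<close>)
  moreover have "valid_collapse n (int (a 1)) True (int t) q"
    using window img_sub a1_an unfolding valid_collapse_def q_def by force
  ultimately show ?thesis
    by blast
qed

definition reflection :: "nat \<Rightarrow> nat \<Rightarrow> nat" where
  "reflection n = collapse n (int n) False 1 n"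

lemma valid_reflection: "1 \<le> n \<Longrightarrow> valid_collapse n (int n) False 1 n"
  by (simp add: valid_collapse_def)

lemma reflection_apply: "x \<in> {1..n} \<Longrightarrow> reflection n x = n + 1 - x"
  by (auto simp: reflection_def collapse_def transf_apply collapse_defs)

lemma reflection_involution: "reflection n \<circ> reflection n = id"
proof
  fix x
  show "(reflection n \<circ> reflection n) x = id x"
  proof (cases "x \<in> {1..n}")
    case True
    moreover from True have "n + 1 - x \<in> {1..n}"
      by auto
    ultimately show ?thesis
      by (simp add: reflection_apply)
  next
    case False
    then show ?thesis
      by (simp add: reflection_def collapse_def transf_outside)
  qed
qed

lemma regular_order_reversing_is_collapse:
  assumes aT: "a \<in> Tn n" and ac: "contraction n a" and ar: "order_reversing n a"
    and bT: "b \<in> Tn n" and bc: "contraction n b"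
    and reg: "\<And>x. x \<in> {1..n} \<Longrightarrow> a (b (a x)) = a x" and n: "1 \<le> n"
  shows "\<exists>s k q. valid_collapse n s False k q \<and> a = collapse n s False k q"
proof -
  let ?r = "reflection n"
  have r: "?r \<in> Tn n" "contraction n ?r" "order_reversing n ?r"
    unfolding reflection_def using valid_reflection[OF n]
    by (simp_all add: collapse_in_Tn contraction_collapse order_reversing_collapse)
  have "\<exists>s k q. valid_collapse n s True k q \<and> a \<circ> ?r = collapse n s True k q"
  proof (rule regular_order_preserving_is_collapse)
    show "a \<circ> ?r \<in> Tn n" "?r \<circ> b \<in> Tn n"
      using aT bT r by (simp_all add: Tn_comp)
    show "contraction n (a \<circ> ?r)" "contraction n (?r \<circ> b)"
      using aT ac bT bc r by (simp_all add: contraction_comp)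
    show "order_preserving n (a \<circ> ?r)"
      using ar r by (simp add: order_preserving_comp_reversing)
    show "(a \<circ> ?r) ((?r \<circ> b) ((a \<circ> ?r) x)) = (a \<circ> ?r) x" if "x \<in> {1..n}" for x
      using reg[OF Tn_mapsto[OF r(1) that]] pointfree_idE[OF reflection_involution] by simp
  qed (rule n)
  then obtain s k q where v: "valid_collapse n s True k q" and a_r: "a \<circ> ?r = collapse n s True k q"
    by blast
  have "a = collapse n s True k q \<circ> ?r"
    using a_r reflection_involution by (metis comp_assoc comp_id)
  also have "\<dots> = collapse n (s + int q - 1) False (int n + 2 - k - int q) q"
    unfolding reflection_def using valid_reflection[OF n] v
    by (intro collapse_comp) (auto simp: collapse_defs)
  finally have "a = collapse n (s + int q - 1) False (int n + 2 - k - int q) q" .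
  moreover have "valid_collapse n (s + int q - 1) False (int n + 2 - k - int q) q"
    using v by (auto simp: valid_collapse_def)
  ultimately show ?thesis
    by blast
qed

lemma J_is_collapse:
  assumes "a \<in> J n p" "1 \<le> n"
  obtains s e k where "valid_collapse n s e k p" "a = collapse n s e k p"
proof -
  from assms obtain b where a: "a \<in> ORCT n" and b: "b \<in> ORCT n" and "tmult (tmult a b) a = a"
    and card: "card (a ` {1..n}) = p"
    unfolding J_def regular_ORCT_def by blast
  then have reg: "a (b (a x)) = a x" for x
    by (metis comp_apply tmult_def)
  have "\<exists>s e k q. valid_collapse n s e k q \<and> a = collapse n s e k q"
    using a b regular_order_preserving_is_collapse[of a n b, OF _ _ _ _ _ reg assms(2)]
      regular_order_reversing_is_collapse[of a n b, OF _ _ _ _ _ reg assms(2)]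
    unfolding ORCT_def by blast
  then obtain s e k q where v: "valid_collapse n s e k q" and a_eq: "a = collapse n s e k q"
    by blast
  moreover have "q = p"
    using card card_collapse_image[OF v] a_eq by simp
  ultimately show ?thesis
    using that by blast
qed

theorem proposition18:
  fixes n p :: nat
  assumes "n \<ge> 4" and "1 \<le> p" and "p \<le> n - 2"
  shows "gen_semigroup (J n p) \<subseteq> gen_semigroup (J n (p + 1))"
proof (rule gen_semigroup_minimal, rule subsetI)
  fix a assume "a \<in> J n p"
  then obtain s e k where "valid_collapse n s e k p" "a = collapse n s e k p"
    using assms(1) by (elim J_is_collapse) auto
  moreover have "p + 2 \<le> n"
    using assms by linarith
  ultimately show "a \<in> gen_semigroup (J n (p + 1))"
    using collapse_in_gen_semigroup_Suc by blast
qed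

end
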